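(* Under Assumption 1, let $(x^k)_{k\in\mathbb{N}}$ be generated by PPGA. Then $(x^k)$ is bounded and every accumulation point of $(x^k)$ is a stationary point of $F$.
   Context: Let $f:\mathbb{R}^n\to(-\infty,+\infty]$ be proper lsc, $g,h:\mathbb{R}^n\to\mathbb{R}$, $\Omega:=\{x:g(x)\ne0\}$, $F(x):=\frac{f(x)+h(x)}{g(x)}$ on $\Omega\cap\mathrm{dom}(f)$ and $+\infty$ otherwise. Assumption 1: (i) $f$ locally Lipschitz on $\mathrm{dom}(f)\cap\Omega$; (ii) $g$ locally Lipschitz continuously differentiable and positive on $\Omega\cap\mathrm{dom}(f)$; (iii) $\nabla h$ is $L$-Lipschitz, $L>0$; (iv) $f+h\ge0$ on $\mathrm{dom}(f)$, $\Omega\cap\mathrm{dom}(f)\ne\emptyset$; (v) $\mathrm{prox}_{f-\gamma g}(x)\ne\emptyset$ for all $x$, $\gamma\ge0$; (vi) $F$ lsc and level bounded. $\mathrm{prox}_\varphi(x):=\arg\min_u\{\varphi(u)+\frac12\|u-x\|_2^2\}$. Fréchet subdifferential: $\hat\partial\varphi(x):=\{v:\liminf_{z\to x,z\ne x}\frac{\varphi(z)-\varphi(x)-\langle v,z-x\rangle}{\|z-x\|_2}\ge0\}$; a stationary point of $F$ is $x^\star$ with $0\in\hat\partial F(x^\star)$. PPGA: choose $x^0\in\Omega\cap\mathrm{dom}(f)$ and $0<\underline\alpha\le\alpha_k\le\overline\alpha<1/L$; for $k=0,1,\dots$ set $C_k:=F(x^k)$ and pick any $x^{k+1}\in\mathrm{prox}_{\alpha_k(f-C_kg)}(x^k-\alpha_k\nabla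 h(x^k))$. *)

theory Defs
  imports "HOL-Analysis.Analysis"
begin

text \<open>Extended-real valued functions \<open>'a \<Rightarrow> ereal\<close> model functions into (-inf,+inf].\<close>

definition edom :: "('a \<Rightarrow> ereal) \<Rightarrow> 'a set" where
  "edom f = {x. f x < \<infinity>}"

definition proper_fun :: "('a \<Rightarrow> ereal) \<Rightarrow> bool" where
  "proper_fun f \<longleftrightarrow> (\<forall>x. f x \<noteq> -\<infinity>) \<and> edom f \<noteq> {}"

definition lsc_fun :: "('a::topological_space \<Rightarrow> ereal) \<Rightarrow> bool" where
  "lsc_fun f \<longleftrightarrow> (\<forall>x. f x \<le> Liminf (at x) f)"

definition loc_lipschitz_on :: "'a::metric_space set \<Rightarrow> ('a \<Rightarrow> 'b::metric_space) \<Rightarrow> bool" where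
  "loc_lipschitz_on S f \<longleftrightarrow> (\<forall>x\<in>S. \<exists>e>0. \<exists>C. C-lipschitz_on (S \<inter> ball x e) f)"

definition level_bounded :: "('a::metric_space \<Rightarrow> ereal) \<Rightarrow> bool" where
  "level_bounded F \<longleftrightarrow> (\<forall>c::real. bounded {x. F x \<le> ereal c})"

definition prox :: "('a::real_normed_vector \<Rightarrow> ereal) \<Rightarrow> 'a \<Rightarrow> 'a set" where
  "prox \<phi> x = {u. \<forall>w. \<phi> u + ereal (norm (u - x)^2 / 2) \<le> \<phi> w + ereal (norm (w - x)^2 / 2)}"

definition frac_obj :: "('a \<Rightarrow> ereal) \<Rightarrow> ('a \<Rightarrow> real) \<Rightarrow> ('a \<Rightarrow> real) \<Rightarrow> 'a \<Rightarrow> ereal" where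
  "frac_obj f g h x = (if g x \<noteq> 0 \<and> x \<in> edom f
      then ereal ((real_of_ereal (f x) + h x) / g x) else \<infinity>)"

definition frechet_subdiff :: "('a::real_inner \<Rightarrow> ereal) \<Rightarrow> 'a \<Rightarrow> 'a set" where
  "frechet_subdiff \<phi> x = (if \<bar>\<phi> x\<bar> \<noteq> \<infinity> then
     {v. Liminf (at x) (\<lambda>z. (\<phi> z - \<phi> x - ereal (v \<bullet> (z - x))) / ereal (norm (z - x))) \<ge> 0}
   else {})"

end

theory Submission
  imports Defs
begin

text \<open>
  Write \<open>C\<^sub>k = F(x\<^sup>k)\<close>. Comparing the prox step with the candidate \<open>x\<^sup>k\<close> and using the descent
  lemma for \<open>h\<close> gives the sufficient decrease
  \<open>(1/\<alpha>hi - L)/2 \<cdot> \<parallel>x\<^sup>k\<^sup>+\<^sup>1 - x\<^sup>k\<parallel>\<^sup>2 \<le> (C\<^sub>k - C\<^sub>k\<^sub>+\<^sub>1) g(x\<^sup>k\<^sup>+\<^sup>1)\<close>.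
  Hence the iterates stay in \<open>dom F\<close>, \<open>C\<^sub>k\<close> decreases to a limit \<open>C\<^sub>*\<close>, and the iterates lie in a
  sublevel set of \<open>F\<close>, so they are bounded. Along a subsequence converging to \<open>x\<^sub>*\<close> the steps vanish,
  lower semicontinuity of \<open>f\<close> and \<open>F\<close> gives \<open>f(x\<^sup>k) \<rightarrow> f(x\<^sub>*)\<close> and \<open>F(x\<^sub>*) = C\<^sub>*\<close>, and passing to the
  limit in the prox inequality yields \<open>f + h - C\<^sub>* g \<ge> -M \<parallel>\<cdot> - x\<^sub>*\<parallel>\<^sup>2\<close> on \<open>dom f\<close>. Dividing by \<open>g\<close> this is a
  quadratic minorant of \<open>F - F(x\<^sub>*)\<close> near \<open>x\<^sub>*\<close>, which makes \<open>0\<close> a Frechet subgradient.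
\<close>

lemma lipschitz_gradient_quadratic_bound:
  fixes h :: "'a::real_inner \<Rightarrow> real"
  assumes h: "\<And>y. (h has_derivative (\<lambda>v. G y \<bullet> v)) (at y)" and G: "L-lipschitz_on UNIV G"
  shows "\<bar>h y - h x - G x \<bullet> (y - x)\<bar> \<le> L / 2 * norm (y - x)^2"
proof -
  define d where "d = y - x"
  define \<phi> where "\<phi> t = h (x + t *\<^sub>R d) - t * (G x \<bullet> d)" for t
  have \<phi>_deriv: "(\<phi> has_real_derivative (G (x + t *\<^sub>R d) - G x) \<bullet> d) (at t)" for t
  proof -
    have "((\<lambda>t. x + t *\<^sub>R d) has_derivative (\<lambda>s. s *\<^sub>R d)) (at t)"
      by (auto intro!: derivative_eq_intros)
    from has_derivative_compose[OF this h]
    have "((\<lambda>t. h (x + t *\<^sub>R d)) has_derivative (\<lambda>s. G (x + t *\<^sub>R d) \<bullet> (s *\<^sub>R d))) (at t)" .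
    moreover have "(\<lambda>s. G (x + t *\<^sub>R d) \<bullet> (s *\<^sub>R d)) = (*) (G (x + t *\<^sub>R d) \<bullet> d)"
      by (rule ext) simp
    ultimately have "((\<lambda>t. h (x + t *\<^sub>R d)) has_real_derivative G (x + t *\<^sub>R d) \<bullet> d) (at t)"
      unfolding has_field_derivative_def by (simp only:)
    then show ?thesis
      unfolding \<phi>_def by (auto intro!: derivative_eq_intros simp: inner_diff_left)
  qed
  have \<phi>'_bound: "\<bar>(G (x + t *\<^sub>R d) - G x) \<bullet> d\<bar> \<le> L * t * norm d ^ 2" if "0 \<le> t" for t
  proof -
    have "\<bar>(G (x + t *\<^sub>R d) - G x) \<bullet> d\<bar> \<le> norm (G (x + t *\<^sub>R d) - G x) * norm d"
      by (rule Cauchy_Schwarz_ineq2)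
    also have "\<dots> \<le> L * norm (t *\<^sub>R d) * norm d"
      using lipschitz_onD[OF G, of "x + t *\<^sub>R d" x] by (intro mult_right_mono) (auto simp: dist_norm)
    also have "\<dots> = L * t * norm d ^ 2"
      using that by (simp add: power2_eq_square)
    finally show ?thesis .
  qed
  txt \<open>Since \<open>\<bar>\<phi>' t\<bar> \<le> L t \<parallel>d\<parallel>\<^sup>2\<close>, the functions \<open>\<phi> t \<plusminus> L t\<^sup>2 \<parallel>d\<parallel>\<^sup>2 / 2\<close> are monotone on \<open>[0,1]\<close>.\<close>
  have "\<phi> 1 - L/2 * 1^2 * norm d^2 \<le> \<phi> 0 - L/2 * 0^2 * norm d^2"
  proof (rule DERIV_nonpos_imp_nonincreasing[of 0 1 "\<lambda>t. \<phi> t - L/2 * t^2 * norm d^2"])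
    fix t :: real assume t: "0 \<le> t" "t \<le> 1"
    have "((\<lambda>t. \<phi> t - L/2 * t^2 * norm d^2) has_real_derivative
        (G (x + t *\<^sub>R d) - G x) \<bullet> d - L * t * norm d^2) (at t)"
      by (auto intro!: derivative_eq_intros \<phi>_deriv)
    moreover have "(G (x + t *\<^sub>R d) - G x) \<bullet> d - L * t * norm d^2 \<le> 0"
      using abs_le_D1[OF \<phi>'_bound[OF t(1)]] by linarith
    ultimately show "\<exists>y. ((\<lambda>t. \<phi> t - L/2 * t^2 * norm d^2) has_real_derivative y) (at t) \<and> y \<le> 0"
      by blast
  qed simp
  moreover have "\<phi> 0 + L/2 * 0^2 * norm d^2 \<le> \<phi> 1 + L/2 * 1^2 * norm d^2"
  proof (rule DERIV_nonneg_imp_nondecreasing[of 0 1 "\<lambda>t. \<phi> t + L/2 * t^2 * norm d^2"])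
    fix t :: real assume t: "0 \<le> t" "t \<le> 1"
    have "((\<lambda>t. \<phi> t + L/2 * t^2 * norm d^2) has_real_derivative
        (G (x + t *\<^sub>R d) - G x) \<bullet> d + L * t * norm d^2) (at t)"
      by (auto intro!: derivative_eq_intros \<phi>_deriv)
    moreover have "0 \<le> (G (x + t *\<^sub>R d) - G x) \<bullet> d + L * t * norm d^2"
      using abs_le_D2[OF \<phi>'_bound[OF t(1)]] by linarith
    ultimately show "\<exists>y. ((\<lambda>t. \<phi> t + L/2 * t^2 * norm d^2) has_real_derivative y) (at t) \<and> y \<ge> 0"
      by blast
  qed simp
  ultimately show ?thesis
    unfolding abs_le_iff by (simp add: \<phi>_def d_def)
qed

lemma prox_linearized_ineq:
  fixes f :: "'a::real_inner \<Rightarrow> ereal" and \<psi> :: "'a \<Rightarrow> real"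
  assumes u: "u \<in> prox (\<lambda>u. ereal a * (f u - ereal (\<psi> u))) (x - a *\<^sub>R v)" and a: "a > 0"
    and f: "\<And>y. f y \<noteq> -\<infinity>" and w: "w \<in> edom f"
  shows "u \<in> edom f \<and> real_of_ereal (f u) - \<psi> u + norm (u - x)^2 / (2*a) + (u - x) \<bullet> v
           \<le> real_of_ereal (f w) - \<psi> w + norm (w - x)^2 / (2*a) + (w - x) \<bullet> v"
proof -
  have min: "ereal a * (f u - ereal (\<psi> u)) + ereal (norm (u - (x - a *\<^sub>R v))^2 / 2)
      \<le> ereal a * (f w - ereal (\<psi> w)) + ereal (norm (w - (x - a *\<^sub>R v))^2 / 2)"
    using u unfolding prox_def by blast
  obtain fw where fw: "f w = ereal fw"
    using w f[of w] unfolding edom_def by (cases "f w") auto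
  then have "f u \<noteq> \<infinity>"
    using min a by auto
  then obtain fu where fu: "f u = ereal fu"
    using f[of u] by (cases "f u") auto
  have scaled: "a * (real_of_ereal (f z) - \<psi> z + norm (z - x)^2 / (2*a) + (z - x) \<bullet> v)
      = a * (real_of_ereal (f z) - \<psi> z) + norm (z - (x - a *\<^sub>R v))^2 / 2 - a^2 * norm v^2 / 2"
    for z
    using a unfolding power2_norm_eq_inner
    by (simp add: inner_diff inner_add field_simps inner_commute power2_eq_square)
  have "a * (fu - \<psi> u + norm (u - x)^2 / (2*a) + (u - x) \<bullet> v)
      \<le> a * (fw - \<psi> w + norm (w - x)^2 / (2*a) + (w - x) \<bullet> v)"
    using min scaled[of u] scaled[of w] unfolding fu fw by simp
  then show ?thesis
    using a by (simp add: fu fw edom_def)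
qed

lemma lsc_fun_eventually_less:
  fixes \<phi> :: "'a::topological_space \<Rightarrow> ereal"
  assumes "lsc_fun \<phi>" and "(X \<longlongrightarrow> a) F" and "y < \<phi> a"
  shows "eventually (\<lambda>n. y < \<phi> (X n)) F"
proof -
  have "eventually (\<lambda>z. y < \<phi> z) (at a)"
    using assms(1,3) le_Liminf_iff unfolding lsc_fun_def by blast
  then have "eventually (\<lambda>z. y < \<phi> z) (nhds a)"
    using assms(3) eventually_nhds_conv_at by blast
  then show ?thesis
    using assms(2) by (rule eventually_compose_filterlim)
qed

lemma zero_in_frechet_subdiff_if_quadratic_minorant:
  fixes \<phi> :: "'a::real_inner \<Rightarrow> ereal"
  assumes \<phi>x: "\<phi> x = ereal c" and minorant: "\<forall>\<^sub>F z in at x. ereal (c - K * norm (z - x)^2) \<le> \<phi> z"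
  shows "0 \<in> frechet_subdiff \<phi> x"
proof -
  have "0 \<le> Liminf (at x) (\<lambda>z. (\<phi> z - \<phi> x) / ereal (norm (z - x)))"
    unfolding le_Liminf_iff
  proof (intro allI impI)
    fix y :: ereal assume "y < 0"
    then obtain t where t: "y < ereal t" "t < 0"
      using ereal_dense2 by fastforce
    define K' where "K' = \<bar>K\<bar> + 1"
    have K': "K' > 0" "K \<le> K'"
      unfolding K'_def by auto
    have "\<forall>\<^sub>F z in at x. z \<noteq> x \<and> norm (z - x) < - t / K'"
      unfolding eventually_at using t(2) K' by (auto simp: dist_norm divide_neg_pos intro!: exI[of _ "- t / K'"])
    with minorant show "\<forall>\<^sub>F z in at x. y < (\<phi> z - \<phi> x) / ereal (norm (z - x))"
    proof eventually_elim
      case (elim z)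
      define n where "n = norm (z - x)"
      have n: "0 < n" "K' * n < - t"
        using elim K'(1) by (auto simp: n_def field_simps)
      show ?case
      proof (cases "\<phi> z")
        case (real r)
        have "t < - K' * n"
          using n by simp
        also have "- K' * n \<le> - K * n"
          using K'(2) n(1) by (simp add: mult_right_mono)
        also have "- K * n \<le> (r - c) / n"
        proof -
          have "c - K * n^2 \<le> r"
            using elim real by (simp add: n_def)
          then show ?thesis
            using n(1) by (simp add: field_simps power2_eq_square)
        qed
        finally have "ereal t < ereal ((r - c) / n)"
          by simp
        with t(1) have "y < ereal ((r - c) / n)"
          by (rule order.strict_trans)
        then show ?thesis
          using n(1) real \<phi>x by (simp add: n_def[symmetric])
      next
        case PInf
        then show ?thesis
          using \<open>y < 0\<close> n(1) \<phi>x by (cases y) (auto simp: n_def[symmetric])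
      next
        case MInf
        then show ?thesis
          using elim by simp
      qed
    qed
  qed
  then show ?thesis
    unfolding frechet_subdiff_def using \<phi>x by simp
qed

lemma subseq_Suc_tendsto:
  assumes r: "strict_mono r" and X: "(X \<circ> r) \<longlonglongrightarrow> l"
  obtains p where "strict_mono p" "(\<lambda>j. X (Suc (p j))) \<longlonglongrightarrow> l"
proof
  define p where "p j = r (Suc j) - 1" for j
  have Suc_p: "Suc (p j) = r (Suc j)" for j
    using seq_suble[OF r, of "Suc j"] unfolding p_def by simp
  show "strict_mono p"
    unfolding strict_mono_Suc_iff
    using r Suc_p by (metis Suc_less_eq strict_mono_Suc_iff)
  show "(\<lambda>j. X (Suc (p j))) \<longlonglongrightarrow> l"
    using LIMSEQ_Suc[OF X] by (simp add: Suc_p comp_def)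
qed

locale fractional_ppga =
  fixes f :: "'a::real_inner \<Rightarrow> ereal" and g h :: "'a \<Rightarrow> real" and gradh :: "'a \<Rightarrow> 'a"
    and L \<alpha>lo \<alpha>hi :: real and \<alpha> :: "nat \<Rightarrow> real" and x :: "nat \<Rightarrow> 'a"
  assumes f_not_MInf: "\<And>y. f y \<noteq> -\<infinity>"
    and f_lsc: "lsc_fun f"
    and g_pos: "\<And>y. y \<in> {y. g y \<noteq> 0} \<inter> edom f \<Longrightarrow> 0 < g y"
    and g_cont: "\<And>y. y \<in> {y. g y \<noteq> 0} \<inter> edom f \<Longrightarrow> isCont g y"
    and h_deriv: "\<And>y. (h has_derivative (\<lambda>v. gradh y \<bullet> v)) (at y)"
    and gradh_lipschitz: "L-lipschitz_on UNIV gradh"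
    and fh_nonneg: "\<And>y. y \<in> edom f \<Longrightarrow> 0 \<le> f y + ereal (h y)"
    and F_lsc: "lsc_fun (frac_obj f g h)"
    and F_level_bounded: "level_bounded (frac_obj f g h)"
    and x0: "x 0 \<in> {y. g y \<noteq> 0} \<inter> edom f"
    and \<alpha>lo_pos: "0 < \<alpha>lo"
    and \<alpha>_bounds: "\<And>k. \<alpha>lo \<le> \<alpha> k \<and> \<alpha> k \<le> \<alpha>hi"
    and \<alpha>hi_less: "\<alpha>hi < 1 / L"
    and iter: "\<And>k. x (Suc k) \<in> prox
                 (\<lambda>u. ereal (\<alpha> k) * (f u - ereal (real_of_ereal (frac_obj f g h (x k)) * g u)))
                 (x k - \<alpha> k *\<^sub>R gradh (x k))"
begin

abbreviation F :: "'a \<Rightarrow> ereal" where "F \<equiv> frac_obj f g h"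

abbreviation \<Omega> :: "'a set" where "\<Omega> \<equiv> {y. g y \<noteq> 0} \<inter> edom f"

abbreviation fr :: "'a \<Rightarrow> real" where "fr y \<equiv> real_of_ereal (f y)"

definition C :: "nat \<Rightarrow> real" where "C k = real_of_ereal (F (x k))"

lemma f_eq_ereal: "y \<in> edom f \<Longrightarrow> f y = ereal (fr y)"
  using f_not_MInf[of y] by (cases "f y") (auto simp: edom_def)

lemma F_eq: "y \<in> \<Omega> \<Longrightarrow> F y = ereal ((fr y + h y) / g y)"
  by (simp add: frac_obj_def)

lemma F_outside_\<Omega>: "y \<notin> \<Omega> \<Longrightarrow> F y = \<infinity>"
  by (auto simp: frac_obj_def)

lemma fh_real_nonneg:
  assumes "y \<in> edom f"
  shows "0 \<le> fr y + h y"
  using fh_nonneg[OF assms] by (subst (asm) f_eq_ereal[OF assms]) simp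

lemma \<alpha>_pos: "0 < \<alpha> k"
  using \<alpha>lo_pos \<alpha>_bounds[of k] by linarith

lemma decrease_const_pos: "0 < 1 / \<alpha>hi - L"
proof -
  have "0 < \<alpha>hi"
    using \<alpha>_pos[of 0] \<alpha>_bounds[of 0] by linarith
  moreover have "0 < L"
    using \<alpha>hi_less \<open>0 < \<alpha>hi\<close> lipschitz_on_nonneg[OF gradh_lipschitz] by (cases "L = 0") auto
  ultimately show ?thesis
    using \<alpha>hi_less by (simp add: field_simps)
qed

lemma h_cont: "isCont h y"
  using h_deriv has_derivative_continuous by blast

lemma gradh_cont: "isCont gradh y"
  using lipschitz_on_continuous_on[OF gradh_lipschitz] by (simp add: continuous_on_eq_continuous_at)

lemma h_taylor_bound: "\<bar>h w - h y - gradh y \<bullet> (w - y)\<bar> \<le> L / 2 * norm (w - y)^2"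
  using lipschitz_gradient_quadratic_bound[OF h_deriv gradh_lipschitz] .

lemma prox_step:
  assumes "w \<in> edom f"
  shows "x (Suc k) \<in> edom f \<and>
    fr (x (Suc k)) - C k * g (x (Suc k)) + norm (x (Suc k) - x k)^2 / (2 * \<alpha> k) + (x (Suc k) - x k) \<bullet> gradh (x k)
    \<le> fr w - C k * g w + norm (w - x k)^2 / (2 * \<alpha> k) + (w - x k) \<bullet> gradh (x k)"
  using prox_linearized_ineq[OF iter[of k, folded C_def] \<alpha>_pos f_not_MInf assms] .

lemma sufficient_decrease:
  assumes xk: "x k \<in> \<Omega>"
  shows "x (Suc k) \<in> \<Omega> \<and> (1 / \<alpha>hi - L) / 2 * norm (x (Suc k) - x k)^2 \<le> (C k - C (Suc k)) * g (x (Suc k))"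
proof -
  define u d where "u = x (Suc k)" and "d = x (Suc k) - x k"
  have prox: "u \<in> edom f" "fr u - C k * g u + norm d^2 / (2 * \<alpha> k) + d \<bullet> gradh (x k) \<le> fr (x k) - C k * g (x k)"
    using prox_step[of "x k" k] xk by (simp_all add: u_def d_def)
  have "C k * g (x k) = fr (x k) + h (x k)"
    using F_eq[OF xk] g_pos[OF xk] by (simp add: C_def)
  moreover have "h u - h (x k) - gradh (x k) \<bullet> d \<le> L / 2 * norm d^2"
    using abs_le_D1[OF h_taylor_bound[of u "x k"]] by (simp add: u_def d_def)
  moreover have "norm d^2 / (2 * \<alpha>hi) \<le> norm d^2 / (2 * \<alpha> k)"
    using \<alpha>_pos[of k] \<alpha>_bounds[of k] by (intro divide_left_mono) auto
  ultimately have decrease: "fr u + h u - C k * g u \<le> - ((1 / \<alpha>hi - L) / 2 * norm d^2)"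
    using prox(2) by (simp add: inner_commute field_simps)
  have "g u \<noteq> 0"
  proof
    assume "g u = 0"
    then have "(1 / \<alpha>hi - L) / 2 * norm d^2 \<le> 0"
      using decrease fh_real_nonneg[OF prox(1)] by (simp only: mult_zero_right diff_zero)
    then have "u = x k"
      using decrease_const_pos by (simp add: d_def u_def mult_le_0_iff)
    with \<open>g u = 0\<close> xk show False
      by simp
  qed
  with prox(1) have u: "u \<in> \<Omega>"
    by simp
  then have "(C k - C (Suc k)) * g u = C k * g u - (fr u + h u)"
    using F_eq[OF u] g_pos[OF u] by (simp add: C_def u_def field_simps)
  with decrease have "(1 / \<alpha>hi - L) / 2 * norm d^2 \<le> (C k - C (Suc k)) * g u"
    by linarith
  with u show ?thesis
    unfolding u_def d_def by blast
qed

lemma iterates_in_\<Omega>: "x k \<in> \<Omega>"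
  by (induction k) (use x0 sufficient_decrease in auto)

lemma F_iterate: "F (x k) = ereal (C k)"
  by (simp add: C_def F_eq[OF iterates_in_\<Omega>])

lemma C_nonneg: "0 \<le> C k"
  using F_eq[OF iterates_in_\<Omega>[of k]] g_pos[OF iterates_in_\<Omega>[of k]] fh_real_nonneg[of "x k"]
    iterates_in_\<Omega>[of k]
  by (simp add: C_def)

lemma C_decseq: "decseq C"
proof (rule decseq_SucI)
  fix k
  have "0 \<le> (C k - C (Suc k)) * g (x (Suc k))"
    using sufficient_decrease[OF iterates_in_\<Omega>[of k]] decrease_const_pos
    by (meson mult_nonneg_nonneg order_trans zero_le_power2 less_imp_le half_gt_zero)
  then show "C (Suc k) \<le> C k"
    using g_pos[OF iterates_in_\<Omega>[of "Suc k"]] by (simp add: zero_le_mult_iff)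
qed

lemma C_tendsto: "C \<longlonglongrightarrow> lim C"
  using decseq_convergent[OF C_decseq, of 0] C_nonneg by (metis limI)

lemma bounded_iterates: "bounded (range x)"
proof (rule bounded_subset)
  show "bounded {y. F y \<le> ereal (C 0)}"
    using F_level_bounded unfolding level_bounded_def by blast
  show "range x \<subseteq> {y. F y \<le> ereal (C 0)}"
    using C_decseq by (auto simp: F_iterate decseq_def)
qed

lemma prox_step_upper:
  assumes "w \<in> edom f"
  shows "fr (x (Suc k)) - C k * g (x (Suc k)) + (x (Suc k) - x k) \<bullet> gradh (x k)
    \<le> fr w - C k * g w + norm (w - x k)^2 / (2 * \<alpha>lo) + (w - x k) \<bullet> gradh (x k)"
proof -
  have "norm (w - x k)^2 / (2 * \<alpha> k) \<le> norm (w - x k)^2 / (2 * \<alpha>lo)"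
    using \<alpha>lo_pos \<alpha>_bounds[of k] by (intro divide_left_mono) auto
  moreover have "0 \<le> norm (x (Suc k) - x k)^2 / (2 * \<alpha> k)"
    using \<alpha>_pos[of k] by simp
  ultimately show ?thesis
    using prox_step[OF assms, of k] by linarith
qed


text \<open>
  The prox step \<open>p j\<close> links \<open>x (p j)\<close> with \<open>x (Suc (p j))\<close>, so accumulation points are studied
  through subsequences whose successors converge.
\<close>

context
  fixes p :: "nat \<Rightarrow> nat" and xs :: 'a
  assumes p: "strict_mono p" and x_Suc_p: "(\<lambda>j. x (Suc (p j))) \<longlonglongrightarrow> xs"
begin

lemma C_p_tendsto: "(\<lambda>j. C (p j)) \<longlonglongrightarrow> lim C" and C_Suc_p_tendsto: "(\<lambda>j. C (Suc (p j))) \<longlonglongrightarrow> lim C"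
proof -
  show "(\<lambda>j. C (p j)) \<longlonglongrightarrow> lim C"
    using LIMSEQ_subseq_LIMSEQ[OF C_tendsto p] by (simp add: comp_def)
  then show "(\<lambda>j. C (Suc (p j))) \<longlonglongrightarrow> lim C"
    using LIMSEQ_subseq_LIMSEQ[OF C_tendsto, of "\<lambda>j. Suc (p j)"] p
    by (simp add: comp_def strict_mono_def)
qed

lemma accumulation_point_in_\<Omega>: "xs \<in> \<Omega>"
proof -
  have "F xs \<le> ereal (lim C)"
  proof (rule ccontr)
    assume "\<not> F xs \<le> ereal (lim C)"
    then obtain t where t: "lim C < t" "ereal t < F xs"
      using ereal_dense2 by (metis not_le ereal_less(2) less_ereal.simps(1))
    have "\<forall>\<^sub>F j in sequentially. ereal t < F (x (Suc (p j)))"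
      using lsc_fun_eventually_less[OF F_lsc x_Suc_p t(2)] .
    moreover have "\<forall>\<^sub>F j in sequentially. C (Suc (p j)) < t"
      using order_tendstoD(2)[OF C_Suc_p_tendsto t(1)] .
    ultimately have "\<forall>\<^sub>F j in sequentially. False"
      by eventually_elim (simp add: F_iterate)
    then show False
      by simp
  qed
  then show ?thesis
    using F_outside_\<Omega>[of xs] by force
qed

lemma step_tendsto_zero: "(\<lambda>j. x (Suc (p j)) - x (p j)) \<longlonglongrightarrow> 0"
proof -
  define c where "c = (1 / \<alpha>hi - L) / 2"
  have c: "0 < c"
    using decrease_const_pos by (simp add: c_def)
  have g_tendsto: "(\<lambda>j. g (x (Suc (p j)))) \<longlonglongrightarrow> g xs"
    using isCont_tendsto_compose[OF g_cont[OF accumulation_point_in_\<Omega>] x_Suc_p] .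
  have "(\<lambda>j. norm (x (Suc (p j)) - x (p j))^2) \<longlonglongrightarrow> 0"
  proof (rule tendsto_sandwich[of "\<lambda>j. 0" _ _ "\<lambda>j. (C (p j) - C (Suc (p j))) * g (x (Suc (p j))) / c"])
    show "\<forall>\<^sub>F j in sequentially. norm (x (Suc (p j)) - x (p j))^2 \<le> (C (p j) - C (Suc (p j))) * g (x (Suc (p j))) / c"
      using sufficient_decrease[OF iterates_in_\<Omega>] c by (simp add: c_def field_simps mult.commute)
    have "(\<lambda>j. (C (p j) - C (Suc (p j))) * g (x (Suc (p j))) / c) \<longlonglongrightarrow> (lim C - lim C) * g xs / c"
      by (intro tendsto_intros C_p_tendsto C_Suc_p_tendsto g_tendsto) (use c in simp)
    then show "(\<lambda>j. (C (p j) - C (Suc (p j))) * g (x (Suc (p j))) / c) \<longlonglongrightarrow> 0"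
      by simp
  qed auto
  then have "(\<lambda>j. sqrt (norm (x (Suc (p j)) - x (p j))^2)) \<longlonglongrightarrow> sqrt 0"
    by (intro tendsto_intros)
  then show ?thesis
    by (simp add: tendsto_norm_zero_iff)
qed

lemma x_p_tendsto: "(\<lambda>j. x (p j)) \<longlonglongrightarrow> xs"
  using tendsto_diff[OF x_Suc_p step_tendsto_zero] by simp

lemma f_x_Suc_p_tendsto: "(\<lambda>j. fr (x (Suc (p j)))) \<longlonglongrightarrow> fr xs"
  unfolding order_tendsto_iff
proof (intro conjI allI impI)
  have xs: "xs \<in> edom f"
    using accumulation_point_in_\<Omega> by simp
  fix a assume "a < fr xs"
  then have "ereal a < f xs"
    by (subst f_eq_ereal[OF xs]) simp
  from lsc_fun_eventually_less[OF f_lsc x_Suc_p this]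
  show "\<forall>\<^sub>F j in sequentially. a < fr (x (Suc (p j)))"
    by eventually_elim (metis IntD2 f_eq_ereal iterates_in_\<Omega> less_ereal.simps(1))
next
  have xs: "xs \<in> edom f"
    using accumulation_point_in_\<Omega> by simp
  define R where "R j = C (p j) * g (x (Suc (p j))) - (x (Suc (p j)) - x (p j)) \<bullet> gradh (x (p j))
      + fr xs - C (p j) * g xs + norm (xs - x (p j))^2 / (2 * \<alpha>lo) + (xs - x (p j)) \<bullet> gradh (x (p j))" for j
  have "R \<longlonglongrightarrow> lim C * g xs - 0 \<bullet> gradh xs + fr xs - lim C * g xs + norm (xs - xs)^2 / (2 * \<alpha>lo)
      + (xs - xs) \<bullet> gradh xs"
    unfolding R_def
    by (intro tendsto_intros C_p_tendsto step_tendsto_zero x_p_tendsto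
        isCont_tendsto_compose[OF gradh_cont x_p_tendsto]
        isCont_tendsto_compose[OF g_cont[OF accumulation_point_in_\<Omega>] x_Suc_p])
      (use \<alpha>lo_pos in simp)
  then have R: "R \<longlonglongrightarrow> fr xs"
    by simp
  fix a assume "fr xs < a"
  with R have "\<forall>\<^sub>F j in sequentially. R j < a"
    by (rule order_tendstoD(2))
  then show "\<forall>\<^sub>F j in sequentially. fr (x (Suc (p j))) < a"
  proof eventually_elim
    case (elim j)
    have "fr (x (Suc (p j))) \<le> R j"
      using prox_step_upper[OF xs, of "p j"] unfolding R_def by linarith
    with elim show ?case
      by linarith
  qed
qed

lemma accumulation_point_value: "fr xs + h xs = lim C * g xs"
proof -
  have xs: "xs \<in> \<Omega>" "0 < g xs"
    using accumulation_point_in_\<Omega> g_pos by auto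
  have "(\<lambda>j. (fr (x (Suc (p j))) + h (x (Suc (p j)))) / g (x (Suc (p j)))) \<longlonglongrightarrow> (fr xs + h xs) / g xs"
    using xs
    by (intro tendsto_intros f_x_Suc_p_tendsto isCont_tendsto_compose[OF h_cont x_Suc_p]
        isCont_tendsto_compose[OF g_cont[OF xs(1)] x_Suc_p]) auto
  moreover have "(\<lambda>j. (fr (x (Suc (p j))) + h (x (Suc (p j)))) / g (x (Suc (p j)))) = (\<lambda>j. C (Suc (p j)))"
    using F_iterate F_eq[OF iterates_in_\<Omega>] by (metis ereal.inject)
  ultimately have "(fr xs + h xs) / g xs = lim C"
    using C_Suc_p_tendsto LIMSEQ_unique by metis
  with xs(2) show ?thesis
    by (simp add: field_simps)
qed

lemma limiting_prox_ineq:
  assumes w: "w \<in> edom f"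
  shows "fr xs - lim C * g xs \<le> fr w - lim C * g w + norm (w - xs)^2 / (2 * \<alpha>lo) + (w - xs) \<bullet> gradh xs"
proof (rule LIMSEQ_le)
  have "(\<lambda>j. fr (x (Suc (p j))) - C (p j) * g (x (Suc (p j))) + (x (Suc (p j)) - x (p j)) \<bullet> gradh (x (p j)))
      \<longlonglongrightarrow> fr xs - lim C * g xs + 0 \<bullet> gradh xs"
    by (intro tendsto_intros f_x_Suc_p_tendsto C_p_tendsto step_tendsto_zero
        isCont_tendsto_compose[OF gradh_cont x_p_tendsto]
        isCont_tendsto_compose[OF g_cont[OF accumulation_point_in_\<Omega>] x_Suc_p])
  then show "(\<lambda>j. fr (x (Suc (p j))) - C (p j) * g (x (Suc (p j))) + (x (Suc (p j)) - x (p j)) \<bullet> gradh (x (p j)))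
      \<longlonglongrightarrow> fr xs - lim C * g xs"
    by simp
  show "(\<lambda>j. fr w - C (p j) * g w + norm (w - x (p j))^2 / (2 * \<alpha>lo) + (w - x (p j)) \<bullet> gradh (x (p j)))
      \<longlonglongrightarrow> fr w - lim C * g w + norm (w - xs)^2 / (2 * \<alpha>lo) + (w - xs) \<bullet> gradh xs"
    by (intro tendsto_intros C_p_tendsto x_p_tendsto isCont_tendsto_compose[OF gradh_cont x_p_tendsto])
      (use \<alpha>lo_pos in simp)
qed (use prox_step_upper[OF w] in blast)

lemma accumulation_point_quadratic_growth:
  assumes w: "w \<in> edom f"
  shows "lim C * g w - (1 / (2 * \<alpha>lo) + L / 2) * norm (w - xs)^2 \<le> fr w + h w"
  using limiting_prox_ineq[OF w] accumulation_point_value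
    abs_le_D2[OF h_taylor_bound[of w xs]]
  by (simp add: inner_commute algebra_simps add_divide_distrib)

lemma F_quadratic_minorant:
  "\<forall>\<^sub>F z in at xs. ereal (lim C - (1 / \<alpha>lo + L) / g xs * norm (z - xs)^2) \<le> F z"
proof -
  define M where "M = 1 / (2 * \<alpha>lo) + L / 2"
  have M: "0 \<le> M"
    using \<alpha>lo_pos lipschitz_on_nonneg[OF gradh_lipschitz] by (simp add: M_def)
  have xs: "xs \<in> \<Omega>" "0 < g xs"
    using accumulation_point_in_\<Omega> g_pos by auto
  have "\<forall>\<^sub>F z in at xs. g xs / 2 < g z"
    using g_cont[OF xs(1)] xs(2) unfolding isCont_def by (intro order_tendstoD(1)) auto
  then show ?thesis
  proof eventually_elim
    case (elim z)
    show ?case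
    proof (cases "z \<in> \<Omega>")
      case True
      have gz: "0 < g z"
        using g_pos[OF True] .
      have "lim C - (1 / \<alpha>lo + L) / g xs * norm (z - xs)^2 = lim C - M * norm (z - xs)^2 / (g xs / 2)"
        using xs(2) by (simp add: M_def field_simps)
      also have "\<dots> \<le> lim C - M * norm (z - xs)^2 / g z"
        using elim gz xs(2) M by (intro diff_left_mono divide_left_mono) auto
      also have "\<dots> = (lim C * g z - M * norm (z - xs)^2) / g z"
        using gz by (simp add: field_simps)
      also have "\<dots> \<le> (fr z + h z) / g z"
        using accumulation_point_quadratic_growth[of z] True gz
        by (intro divide_right_mono) (auto simp: M_def)
      finally show ?thesis
        using F_eq[OF True] by simp
    qed (simp add: F_outside_\<Omega>)
  qed
qed

lemma limit_of_successors_stationary: "0 \<in> frechet_subdiff F xs"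
proof (rule zero_in_frechet_subdiff_if_quadratic_minorant)
  show "F xs = ereal (lim C)"
    using F_eq[OF accumulation_point_in_\<Omega>] accumulation_point_value g_pos[OF accumulation_point_in_\<Omega>]
    by simp
qed (rule F_quadratic_minorant)

end

lemma accumulation_point_stationary:
  assumes "strict_mono r" and "(x \<circ> r) \<longlonglongrightarrow> xs"
  shows "0 \<in> frechet_subdiff F xs"
proof -
  obtain p where "strict_mono p" "(\<lambda>j. x (Suc (p j))) \<longlonglongrightarrow> xs"
    using subseq_Suc_tendsto[OF assms] .
  then show ?thesis
    by (rule limit_of_successors_stationary)
qed

end

theorem mainTheorem10:
  fixes f :: "'a::euclidean_space \<Rightarrow> ereal"
    and g h :: "'a \<Rightarrow> real"
    and gradh :: "'a \<Rightarrow> 'a"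
    and L \<alpha>lo \<alpha>hi :: real
    and \<alpha> :: "nat \<Rightarrow> real"
    and x :: "nat \<Rightarrow> 'a"
  assumes f_proper: "proper_fun f"
    and f_lsc: "lsc_fun f"
    and A1: "loc_lipschitz_on (edom f \<inter> {y. g y \<noteq> 0}) (\<lambda>y. real_of_ereal (f y))"
    and A2: "\<exists>gradg :: 'a \<Rightarrow> 'a.
               (\<forall>y \<in> {y. g y \<noteq> 0} \<inter> edom f. (g has_derivative (\<lambda>v. gradg y \<bullet> v)) (at y))
             \<and> loc_lipschitz_on ({y. g y \<noteq> 0} \<inter> edom f) gradg"
    and A2pos: "\<forall>y \<in> {y. g y \<noteq> 0} \<inter> edom f. g y > 0"
    and A3h: "\<forall>y. (h has_derivative (\<lambda>v. gradh y \<bullet> v)) (at y)"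
    and A3: "L-lipschitz_on UNIV gradh" and L_pos: "L > 0"
    and A4: "\<forall>y \<in> edom f. f y + ereal (h y) \<ge> 0"
    and A4': "{y. g y \<noteq> 0} \<inter> edom f \<noteq> {}"
    and A5: "\<forall>y. \<forall>\<gamma>::real. \<gamma> \<ge> 0 \<longrightarrow> prox (\<lambda>u. f u - ereal (\<gamma> * g u)) y \<noteq> {}"
    and A6: "lsc_fun (frac_obj f g h)" and A6': "level_bounded (frac_obj f g h)"
    and x0: "x 0 \<in> {y. g y \<noteq> 0} \<inter> edom f"
    and step: "0 < \<alpha>lo" "\<forall>k. \<alpha>lo \<le> \<alpha> k \<and> \<alpha> k \<le> \<alpha>hi" "\<alpha>hi < 1 / L"
    and iter: "\<forall>k. x (Suc k) \<in> prox
                 (\<lambda>u. ereal (\<alpha> k) * (f u - ereal (real_of_ereal (frac_obj f g h (x k)) * g u)))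
                 (x k - \<alpha> k *\<^sub>R gradh (x k))"
  shows "bounded (range x) \<and>
         (\<forall>xs. (\<exists>r. strict_mono r \<and> (x \<circ> r) \<longlonglongrightarrow> xs) \<longrightarrow> 0 \<in> frechet_subdiff (frac_obj f g h) xs)"
proof -
  obtain gradg where gradg: "\<forall>y \<in> {y. g y \<noteq> 0} \<inter> edom f. (g has_derivative (\<lambda>v. gradg y \<bullet> v)) (at y)"
    using A2 by blast
  interpret fractional_ppga f g h gradh L \<alpha>lo \<alpha>hi \<alpha> x
  proof (unfold_locales)
    show "f y \<noteq> -\<infinity>" for y
      using f_proper unfolding proper_fun_def by blast
    show "isCont g y" if "y \<in> {y. g y \<noteq> 0} \<inter> edom f" for y
      using gradg that has_derivative_continuous by blast
  qed (use f_lsc A2pos A3h A3 A4 A6 A6' x0 step iter in blast)+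
  show ?thesis
    using bounded_iterates accumulation_point_stationary by blast
qed

end
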